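(* Consider $\texttt{CCI}_{n,\mu}(T,C,I,J)$ with $\mathcal{S},\mathcal{C}^{\text{out}},\mathcal{C}^{\text{in}}\subseteq\mathbb{N}$, $\mathbb{E}[T^{1+\varepsilon}]<\infty$ for some $\varepsilon>0$, $\inf_i\{\lambda_i:\lambda_i>0\}>0$ and $\inf_j\{\varrho_j:\varrho_j>0\}>0$. Fix $\tau\in(0,1)$ and let $S_t$ denote the number of self-loops on vertices of type $t$. Then for all $r>0$ and $\nu<\tau$, for all sufficiently large $n$, $$\mathbb{P}\Big(\bigcup_{t=1}^{u_n^\uparrow(\tau)}\{S_t>n^{1-\nu}\}\Big)\le n^{-r}.$$
   Context: Inputs: type distribution $T$ on $\mathcal{S}$, $q_k=\mathbb{P}(T=k)$; colour distribution $C=(C^{\text{out}},C^{\text{in}})$; indicators $I:\mathcal{S}\times\mathcal{C}^{\text{out}}\to\{0,1\}$, $J:\mathcal{S}\times\mathcal{C}^{\text{in}}\to\{0,1\}$; $\mu>0$; $\lambda_i=\sum_kq_kI(k,i)$, $\varrho_j=\sum_kq_kJ(k,j)$. $\texttt{CCI}_{n,\mu}(T,C,I,J)$: vertex set $[n]$, i.i.d. types $T_v\sim T$; for each $a\in[\lfloor\mu n\rfloor]$ an independent colour $C_a\sim C$; choose $v$ uniformly from $\{v:I(T_v,C^{\text{out}}_a)=1\}$ and independently $w$ uniformly from $\{w:J(T_w,C^{\text{in}}_a)=1\}$, and add arc $(v,w)$ (loops and multiple arcs allowed). $u_n^\uparrow(\tau)=\inf\{t:q_s<n^{-1+\tau}\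 \forall s\ge t\}$. *)

theory Defs
  imports "HOL-Probability.Probability"
begin

text \<open>Vertices are 0..n-1 (a relabelling of [n]); types and colours are natural numbers.
  A graph outcome is a pair (tp, arcs): tp v is the type of vertex v, arcs a is the arc
  number a (for a < floor(mu n)), as Some (v, w), or None if no arc could be placed
  because one of the candidate sets was empty (convention).\<close>

definition lam :: "nat pmf \<Rightarrow> (nat \<Rightarrow> nat \<Rightarrow> bool) \<Rightarrow> nat \<Rightarrow> real" where
  "lam T I i = measure_pmf.prob T {k. I k i}"

definition rho :: "nat pmf \<Rightarrow> (nat \<Rightarrow> nat \<Rightarrow> bool) \<Rightarrow> nat \<Rightarrow> real" where
  "rho T J j = measure_pmf.prob T {k. J k j}"

definition num_arcs :: "nat \<Rightarrow> real \<Rightarrow> nat" where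
  "num_arcs n \<mu> = nat \<lfloor>\<mu> * real n\<rfloor>"

definition arc_pmf :: "nat \<Rightarrow> (nat \<times> nat) pmf \<Rightarrow> (nat \<Rightarrow> nat \<Rightarrow> bool) \<Rightarrow> (nat \<Rightarrow> nat \<Rightarrow> bool)
    \<Rightarrow> (nat \<Rightarrow> nat) \<Rightarrow> (nat \<times> nat) option pmf" where
  "arc_pmf n C I J tp =
     bind_pmf C (\<lambda>c.
       (let Out = {v. v < n \<and> I (tp v) (fst c)};
            In = {w. w < n \<and> J (tp w) (snd c)}
        in if Out = {} \<or> In = {} then return_pmf None
           else map_pmf Some (pair_pmf (pmf_of_set Out) (pmf_of_set In))))"

definition CCI :: "nat \<Rightarrow> real \<Rightarrow> nat pmf \<Rightarrow> (nat \<times> nat) pmf \<Rightarrow> (nat \<Rightarrow> nat \<Rightarrow> bool)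
    \<Rightarrow> (nat \<Rightarrow> nat \<Rightarrow> bool) \<Rightarrow> ((nat \<Rightarrow> nat) \<times> (nat \<Rightarrow> (nat \<times> nat) option)) pmf" where
  "CCI n \<mu> T C I J =
     bind_pmf (Pi_pmf {..<n} 0 (\<lambda>_. T)) (\<lambda>tp.
       bind_pmf (Pi_pmf {..<num_arcs n \<mu>} None (\<lambda>_. arc_pmf n C I J tp)) (\<lambda>arcs.
         return_pmf (tp, arcs)))"

definition self_loops :: "nat \<Rightarrow> nat \<Rightarrow> (nat \<Rightarrow> nat) \<times> (nat \<Rightarrow> (nat \<times> nat) option) \<Rightarrow> nat" where
  "self_loops m t G = card {a. a < m \<and> (\<exists>v. snd G a = Some (v, v) \<and> fst G v = t)}"

definition u_up :: "nat pmf \<Rightarrow> nat \<Rightarrow> real \<Rightarrow> nat" where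
  "u_up T n \<tau> = Inf {t. \<forall>s\<ge>t. pmf T s < real n powr (-1 + \<tau>)}"

end

theory Submission
  imports Defs "HOL-Real_Asymp.Real_Asymp"
begin

text \<open>
  Since the self-loops on vertices of type t are among all self-loops, it suffices to show that
  the total number of self-loops exceeds s = n powr (1 - \<nu>) only with superpolynomially small
  probability. Given the vertex types, the arcs are i.i.d., and an arc of colour c is a loop with
  probability at most 1 / |In(c)|, where In(c) is the set of vertices that may receive it.
  If In(c) is nonempty then \<rho> > 0 for the in-colour, hence \<rho> \<ge> \<delta>, and by Hoeffding's
  inequality |In(c)| \<ge> \<delta> n / 2 except with probability exp (- \<delta>^2 n / 2). So a single arc
  is a loop with probability q \<le> 2 / (\<delta> n) + y, where y, the C-probability of a colour with
  too few receivers, has exponentially small expectation over the types. When y \<le> 1 / n, the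
  m = O(n) arcs contain at least s loops with probability at most
  (m choose s) q^s \<le> exp (2 m q) / 2^s = O(2^-s); otherwise we pay n y.
\<close>

lemma measure_bind_pmf:
  "measure_pmf.prob (bind_pmf M N) X = measure_pmf.expectation M (\<lambda>x. measure_pmf.prob (N x) X)"
proof -
  have "ennreal (measure_pmf.prob (bind_pmf M N) X) = (\<integral>\<^sup>+x. emeasure (N x) X \<partial>M)"
    by (simp add: measure_pmf.emeasure_eq_measure[symmetric])
  also have "\<dots> = (\<integral>\<^sup>+x. ennreal (measure_pmf.prob (N x) X) \<partial>M)"
    by (simp only: measure_pmf.emeasure_eq_measure)
  also have "\<dots> = ennreal (measure_pmf.expectation M (\<lambda>x. measure_pmf.prob (N x) X))"
    by (intro nn_integral_eq_integral measure_pmf.integrable_const_bound[where B=1]) auto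
  finally show ?thesis by (simp add: integral_nonneg_AE)
qed

lemma integrable_measure_pmf_bounded:
  fixes f :: "'a \<Rightarrow> real"
  assumes "\<And>x. x \<in> set_pmf M \<Longrightarrow> \<bar>f x\<bar> \<le> B"
  shows "integrable (measure_pmf M) f"
  by (intro measure_pmf.integrable_const_bound[where B=B]) (auto simp: AE_measure_pmf_iff assms)

lemma prob_pair_pmf:
  "measure_pmf.prob (pair_pmf M N) X
     = measure_pmf.expectation M (\<lambda>x. measure_pmf.prob N {y. (x, y) \<in> X})"
proof -
  have "pair_pmf M N = bind_pmf M (\<lambda>x. map_pmf (Pair x) N)"
    by (simp add: pair_pmf_def map_pmf_def)
  then show ?thesis
    by (simp add: measure_bind_pmf vimage_def)
qed

lemma expectation_prob_pmf_commute:
  "measure_pmf.expectation M (\<lambda>x. measure_pmf.prob N {y. P x y})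
     = measure_pmf.expectation N (\<lambda>y. measure_pmf.prob M {x. P x y})"
proof -
  have "measure_pmf.expectation M (\<lambda>x. measure_pmf.prob N {y. P x y})
      = measure_pmf.prob (pair_pmf M N) {(x, y). P x y}"
    by (simp add: prob_pair_pmf)
  also have "\<dots> = measure_pmf.prob (pair_pmf N M) {(y, x). P x y}"
    by (subst pair_commute_pmf) (simp add: vimage_def case_prod_unfold)
  also have "\<dots> = measure_pmf.expectation N (\<lambda>y. measure_pmf.prob M {x. P x y})"
    by (simp add: prob_pair_pmf)
  finally show ?thesis .
qed

lemma prob_pair_pmf_of_set_diag_le:
  assumes "finite B" "B \<noteq> {}"
  shows "measure_pmf.prob (pair_pmf A (pmf_of_set B)) {p. fst p = snd p} \<le> 1 / real (card B)"
proof -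
  have "measure_pmf.prob (pair_pmf A (pmf_of_set B)) {p. fst p = snd p}
      = measure_pmf.expectation A (pmf (pmf_of_set B))"
    by (simp add: prob_pair_pmf measure_pmf_single)
  also have "\<dots> \<le> measure_pmf.expectation A (\<lambda>_. 1 / real (card B))"
    using assms by (intro integral_mono integrable_measure_pmf_bounded[where B=1])
      (auto simp: indicator_def pmf_le_1 Suc_le_eq card_gt_0_iff)
  finally show ?thesis by simp
qed

lemma prob_Pi_pmf_card_ge_le:
  "measure_pmf.prob (Pi_pmf {..<m} d (\<lambda>_. p)) {f. s \<le> card {a. a < m \<and> f a \<in> S}}
     \<le> real (m choose s) * measure_pmf.prob p S ^ s"
proof -
  define q where "q = measure_pmf.prob p S"
  define U where "U = {A. A \<subseteq> {..<m} \<and> card A = s}"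
  define F where "F = (\<lambda>A. Pi {..<m} (\<lambda>a. if a \<in> A then S else UNIV))"
  have finU: "finite U" unfolding U_def by (rule finite_subset[of _ "Pow {..<m}"]) auto
  have cover: "{f. s \<le> card {a. a < m \<and> f a \<in> S}} \<subseteq> \<Union> (F ` U)"
  proof
    fix f assume "f \<in> {f. s \<le> card {a. a < m \<and> f a \<in> S}}"
    then obtain A where A: "A \<subseteq> {a. a < m \<and> f a \<in> S}" "card A = s"
      using obtain_subset_with_card_n by (metis mem_Collect_eq)
    then have "A \<in> U" "f \<in> F A" unfolding U_def F_def by auto
    then show "f \<in> \<Union> (F ` U)" by blast
  qed
  have prob_F: "measure_pmf.prob (Pi_pmf {..<m} d (\<lambda>_. p)) (F A) = q ^ s" if "A \<in> U" for A
  proof -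
    have A: "A \<subseteq> {..<m}" "card A = s" using that unfolding U_def by auto
    have "measure_pmf.prob (Pi_pmf {..<m} d (\<lambda>_. p)) (F A)
        = (\<Prod>a\<in>{..<m}. measure_pmf.prob p (if a \<in> A then S else UNIV))"
      unfolding F_def by (rule measure_Pi_pmf_Pi) auto
    also have "\<dots> = (\<Prod>a\<in>{..<m}. if a \<in> A then q else 1)"
      by (intro prod.cong) (auto simp: q_def)
    also have "\<dots> = q ^ card ({..<m} \<inter> A)"
      by (simp add: prod.If_cases)
    finally show ?thesis using A by (simp add: Int_absorb1)
  qed
  have "measure_pmf.prob (Pi_pmf {..<m} d (\<lambda>_. p)) {f. s \<le> card {a. a < m \<and> f a \<in> S}}
      \<le> measure_pmf.prob (Pi_pmf {..<m} d (\<lambda>_. p)) (\<Union> (F ` U))"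
    by (intro measure_pmf.finite_measure_mono cover) auto
  also have "\<dots> \<le> (\<Sum>A\<in>U. measure_pmf.prob (Pi_pmf {..<m} d (\<lambda>_. p)) (F A))"
    by (intro measure_pmf.finite_measure_subadditive_finite finU) auto
  also have "\<dots> = real (m choose s) * q ^ s"
    by (simp add: prob_F U_def n_subsets)
  finally show ?thesis by (simp add: q_def)
qed

lemma binomial_mult_power_le_exp:
  fixes q :: real
  assumes "q \<ge> 0"
  shows "real (m choose s) * q ^ s \<le> exp (2 * real m * q) / 2 ^ s"
proof -
  have "real (m choose s) * (2 * q) ^ s \<le> (\<Sum>k\<le>m. real (m choose k) * (2 * q) ^ k)"
  proof (cases "s \<le> m")
    case True
    then show ?thesis by (intro member_le_sum) (use assms in auto)
  next
    case False
    then show ?thesis by (simp add: binomial_eq_0 sum_nonneg assms)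
  qed
  also have "\<dots> = (2 * q + 1) ^ m"
    by (simp add: binomial_ring)
  also have "\<dots> \<le> exp (2 * q) ^ m"
    using assms by (subst add.commute) (intro power_mono; simp)
  also have "\<dots> = exp (2 * real m * q)"
    by (simp add: exp_of_nat_mult[symmetric] mult.assoc mult.left_commute)
  finally show ?thesis
    by (simp add: field_simps)
qed

lemma map_pmf_eq_bernoulli_pmf:
  "map_pmf P M = bernoulli_pmf (measure_pmf.prob M {x. P x})"
proof (rule pmf_eqI)
  define q where "q = measure_pmf.prob M {x. P x}"
  have q: "0 \<le> q" "q \<le> 1" unfolding q_def by auto
  fix b :: bool
  show "pmf (map_pmf P M) b = pmf (bernoulli_pmf (measure_pmf.prob M {x. P x})) b"
  proof (cases b)
    case True
    have "P -` {True} = {x. P x}" by auto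
    then show ?thesis using True q by (simp add: pmf_map q_def)
  next
    case False
    have "P -` {False} = - {x. P x}" by auto
    then have "pmf (map_pmf P M) False = 1 - q"
      using measure_pmf.prob_compl[of "{x. P x}" M] by (simp add: pmf_map q_def Compl_eq_Diff_UNIV)
    then show ?thesis using False q by (simp add: q_def)
  qed
qed

lemma num_arcs_le: "0 \<le> \<mu> \<Longrightarrow> real (num_arcs n \<mu>) \<le> \<mu> * n"
  by (simp add: num_arcs_def)

lemma rho_pos_if_in_set_pmf:
  assumes "k \<in> set_pmf T" "J k j"
  shows "0 < rho T J j"
proof -
  have "0 < pmf T k" using assms(1) by (simp add: set_pmf_eq')
  also have "\<dots> = measure_pmf.prob T {k}" by (simp add: measure_pmf_single)
  also have "\<dots> \<le> measure_pmf.prob T {k. J k j}"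
    using assms(2) by (intro measure_pmf.finite_measure_mono) auto
  finally show ?thesis unfolding rho_def .
qed

definition loop_arcs :: "('a \<times> 'a) option set" where
  "loop_arcs = {x. \<exists>v. x = Some (v, v)}"

definition loop_count :: "nat \<Rightarrow> (nat \<Rightarrow> nat) \<times> (nat \<Rightarrow> (nat \<times> nat) option) \<Rightarrow> nat" where
  "loop_count m G = card {a. a < m \<and> snd G a \<in> loop_arcs}"

lemma self_loops_le_loop_count: "self_loops m t G \<le> loop_count m G"
  unfolding self_loops_def loop_count_def loop_arcs_def by (intro card_mono) auto

definition in_candidates :: "nat \<Rightarrow> (nat \<Rightarrow> nat \<Rightarrow> bool) \<Rightarrow> (nat \<Rightarrow> nat) \<Rightarrow> nat \<Rightarrow> nat set" where
  "in_candidates n J tp j = {w. w < n \<and> J (tp w) j}"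

definition arc_of_colour :: "nat \<Rightarrow> (nat \<Rightarrow> nat \<Rightarrow> bool) \<Rightarrow> (nat \<Rightarrow> nat \<Rightarrow> bool) \<Rightarrow> (nat \<Rightarrow> nat)
    \<Rightarrow> nat \<times> nat \<Rightarrow> (nat \<times> nat) option pmf" where
  "arc_of_colour n I J tp c =
     (let Out = {v. v < n \<and> I (tp v) (fst c)}; In = in_candidates n J tp (snd c)
      in if Out = {} \<or> In = {} then return_pmf None
         else map_pmf Some (pair_pmf (pmf_of_set Out) (pmf_of_set In)))"

lemma arc_pmf_eq_bind: "arc_pmf n C I J tp = bind_pmf C (arc_of_colour n I J tp)"
  unfolding arc_pmf_def
  by (intro bind_pmf_cong refl) (simp add: arc_of_colour_def in_candidates_def)

text \<open>No case split on In = {} is needed: then the arc is None, and 1 / 0 = 0.\<close>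

lemma prob_arc_of_colour_loop_le:
  "measure_pmf.prob (arc_of_colour n I J tp c) loop_arcs
     \<le> 1 / real (card (in_candidates n J tp (snd c)))"
proof -
  define Out where "Out = {v. v < n \<and> I (tp v) (fst c)}"
  define In where "In = in_candidates n J tp (snd c)"
  have fin: "finite Out" "finite In" unfolding Out_def In_def in_candidates_def by auto
  show ?thesis
  proof (cases "Out = {} \<or> In = {}")
    case True
    then show ?thesis by (auto simp: arc_of_colour_def Out_def In_def loop_arcs_def)
  next
    case False
    have "arc_of_colour n I J tp c = map_pmf Some (pair_pmf (pmf_of_set Out) (pmf_of_set In))"
      using False unfolding arc_of_colour_def Let_def Out_def[symmetric] In_def[symmetric] by simp
    moreover have "Some -` (loop_arcs :: (nat \<times> nat) option set) = {p. fst p = snd p}"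
      by (auto simp: loop_arcs_def)
    ultimately have "measure_pmf.prob (arc_of_colour n I J tp c) loop_arcs
        = measure_pmf.prob (pair_pmf (pmf_of_set Out) (pmf_of_set In)) {p. fst p = snd p}"
      by simp
    also have "\<dots> \<le> 1 / real (card In)"
      using False fin by (intro prob_pair_pmf_of_set_diag_le) auto
    finally show ?thesis unfolding In_def .
  qed
qed

definition scarce_colours :: "nat pmf \<Rightarrow> (nat \<Rightarrow> nat \<Rightarrow> bool) \<Rightarrow> real \<Rightarrow> nat \<Rightarrow> (nat \<Rightarrow> nat)
    \<Rightarrow> (nat \<times> nat) set" where
  "scarce_colours T J \<delta> n tp =
     {c. \<delta> \<le> rho T J (snd c) \<and> real (card (in_candidates n J tp (snd c))) < \<delta> * n / 2}"

lemma prob_arc_loop_le: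
  assumes types: "\<And>v. v < n \<Longrightarrow> tp v \<in> set_pmf T"
    and \<delta>: "\<delta> > 0" and gap: "\<And>j. 0 < rho T J j \<Longrightarrow> \<delta> \<le> rho T J j" and n: "n > 0"
  shows "measure_pmf.prob (arc_pmf n C I J tp) loop_arcs
           \<le> 2 / (\<delta> * n) + measure_pmf.prob C (scarce_colours T J \<delta> n tp)"
proof -
  have by_colour: "1 / real (card (in_candidates n J tp (snd c)))
      \<le> 2 / (\<delta> * n) + indicator (scarce_colours T J \<delta> n tp) c" for c
  proof -
    define In where "In = in_candidates n J tp (snd c)"
    have fin: "finite In" unfolding In_def in_candidates_def by auto
    have nonneg: "0 \<le> 2 / (\<delta> * n)" "0 \<le> (indicator (scarce_colours T J \<delta> n tp) c :: real)"
      using \<delta> by auto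
    consider "In = {}" | "\<delta> * n / 2 \<le> real (card In)" | "In \<noteq> {}" "real (card In) < \<delta> * n / 2"
      by fastforce
    then show ?thesis
    proof cases
      case 1
      then show ?thesis using nonneg by (simp add: In_def)
    next
      case 2
      moreover have "0 < \<delta> * n / 2" using \<delta> n by simp
      ultimately have "1 / real (card In) \<le> 1 / (\<delta> * n / 2)"
        by (intro divide_left_mono) auto
      also have "\<dots> = 2 / (\<delta> * n)" by simp
      finally show ?thesis using nonneg(2) unfolding In_def by linarith
    next
      case 3
      then obtain w where "w < n" "J (tp w) (snd c)" unfolding In_def in_candidates_def by auto
      then have "\<delta> \<le> rho T J (snd c)" using gap rho_pos_if_in_set_pmf types by blast
      then have "c \<in> scarce_colours T J \<delta> n tp"
        using 3 by (simp add: scarce_colours_def In_def)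
      then have "(indicator (scarce_colours T J \<delta> n tp) c :: real) = 1" by simp
      moreover have "1 / real (card In) \<le> 1"
        using 3 fin by (simp add: card_gt_0_iff Suc_le_eq)
      ultimately show ?thesis using nonneg(1) unfolding In_def by linarith
    qed
  qed
  have "measure_pmf.prob (arc_pmf n C I J tp) loop_arcs
      = measure_pmf.expectation C (\<lambda>c. measure_pmf.prob (arc_of_colour n I J tp c) loop_arcs)"
    by (simp add: arc_pmf_eq_bind measure_bind_pmf)
  also have "\<dots> \<le> measure_pmf.expectation C
      (\<lambda>c. 2 / (\<delta> * n) + indicator (scarce_colours T J \<delta> n tp) c)"
    using \<delta>
    by (intro integral_mono order_trans[OF prob_arc_of_colour_loop_le by_colour]
          integrable_measure_pmf_bounded[where B=1]
          integrable_measure_pmf_bounded[where B="2 / (\<delta> * n) + 1"])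
       (auto simp: indicator_def)
  also have "\<dots> = 2 / (\<delta> * n) + measure_pmf.prob C (scarce_colours T J \<delta> n tp)"
    by (subst Bochner_Integration.integral_add)
       (auto intro!: integrable_measure_pmf_bounded[where B=1] simp: indicator_def)
  finally show ?thesis .
qed

lemma card_in_candidates_binomial:
  "map_pmf (\<lambda>tp. card (in_candidates n J tp j)) (Pi_pmf {..<n} 0 (\<lambda>_. T))
     = binomial_pmf n (rho T J j)"
proof -
  define f where "f = (\<lambda>k. J k j)"
  have "map_pmf (\<lambda>tp. card (in_candidates n J tp j)) (Pi_pmf {..<n} 0 (\<lambda>_. T))
      = map_pmf (\<lambda>h. card {w \<in> {..<n}. h w}) (map_pmf ((\<circ>) f) (Pi_pmf {..<n} 0 (\<lambda>_. T)))"
    by (simp add: pmf.map_comp o_def f_def in_candidates_def)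
  also have "map_pmf ((\<circ>) f) (Pi_pmf {..<n} 0 (\<lambda>_. T)) = Pi_pmf {..<n} (f 0) (\<lambda>_. map_pmf f T)"
    by (rule Pi_pmf_map[symmetric]) auto
  also have "map_pmf f T = bernoulli_pmf (rho T J j)"
    unfolding f_def rho_def by (rule map_pmf_eq_bernoulli_pmf)
  also have "map_pmf (\<lambda>h. card {w \<in> {..<n}. h w}) (Pi_pmf {..<n} (f 0) (\<lambda>_. bernoulli_pmf (rho T J j)))
      = binomial_pmf n (rho T J j)"
    by (rule binomial_pmf_altdef'[symmetric]) (auto simp: rho_def)
  finally show ?thesis .
qed

lemma prob_few_in_candidates_le:
  assumes "n > 0" "\<delta> > 0" "\<delta> \<le> rho T J j"
  shows "measure_pmf.prob (Pi_pmf {..<n} 0 (\<lambda>_. T))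
           {tp. real (card (in_candidates n J tp j)) < \<delta> * n / 2} \<le> exp (- (\<delta>\<^sup>2 * n / 2))"
proof -
  define p where "p = rho T J j"
  have p: "p \<in> {0..1}" unfolding p_def rho_def by auto
  interpret binomial_distribution n p by standard (rule p)
  have "measure_pmf.prob (Pi_pmf {..<n} 0 (\<lambda>_. T))
           {tp. real (card (in_candidates n J tp j)) < \<delta> * n / 2}
      = measure_pmf.prob (binomial_pmf n p) {x. real x < \<delta> * n / 2}"
    unfolding p_def card_in_candidates_binomial[symmetric] measure_map_pmf vimage_def by simp
  also have "\<dots> \<le> measure_pmf.prob (binomial_pmf n p) {x. real x \<le> n * p - \<delta> * n / 2}"
  proof (intro measure_pmf.finite_measure_mono subsetI)
    have "\<delta> * n \<le> p * n" using assms by (intro mult_right_mono) (auto simp: p_def)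
    then show "x \<in> {x. real x \<le> n * p - \<delta> * n / 2}" if "x \<in> {x. real x < \<delta> * n / 2}" for x
      using that by (auto simp: algebra_simps)
  qed auto
  also have "\<dots> \<le> exp (-2 * (\<delta> * n / 2)\<^sup>2 / n)"
    by (rule prob_le) (use assms in auto)
  also have "-2 * (\<delta> * n / 2)\<^sup>2 / n = - (\<delta>\<^sup>2 * n / 2)"
    using assms by (simp add: power2_eq_square field_simps)
  finally show ?thesis .
qed

lemma expectation_scarce_colours_le:
  assumes "n > 0" "\<delta> > 0"
  shows "measure_pmf.expectation (Pi_pmf {..<n} 0 (\<lambda>_. T))
           (\<lambda>tp. measure_pmf.prob C (scarce_colours T J \<delta> n tp)) \<le> exp (- (\<delta>\<^sup>2 * n / 2))"
proof -
  define Ty where "Ty = Pi_pmf {..<n} 0 (\<lambda>_. T)"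
  have "measure_pmf.expectation Ty (\<lambda>tp. measure_pmf.prob C (scarce_colours T J \<delta> n tp))
      = measure_pmf.expectation C (\<lambda>c. measure_pmf.prob Ty {tp. c \<in> scarce_colours T J \<delta> n tp})"
    using expectation_prob_pmf_commute[of Ty C "\<lambda>tp c. c \<in> scarce_colours T J \<delta> n tp"] by simp
  also have "\<dots> \<le> measure_pmf.expectation C (\<lambda>_. exp (- (\<delta>\<^sup>2 * n / 2)))"
  proof (intro integral_mono integrable_measure_pmf_bounded[where B=1])
    show "measure_pmf.prob Ty {tp. c \<in> scarce_colours T J \<delta> n tp} \<le> exp (- (\<delta>\<^sup>2 * n / 2))" for c
    proof (cases "\<delta> \<le> rho T J (snd c)")
      case True
      then show ?thesis
        using prob_few_in_candidates_le[OF assms True] by (simp add: Ty_def scarce_colours_def)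
    next
      case False
      then show ?thesis by (simp add: scarce_colours_def)
    qed
  qed auto
  finally show ?thesis by (simp add: Ty_def)
qed

lemma prob_many_loops_given_types_le:
  assumes types: "\<And>v. v < n \<Longrightarrow> tp v \<in> set_pmf T"
    and \<delta>: "\<delta> > 0" and gap: "\<And>j. 0 < rho T J j \<Longrightarrow> \<delta> \<le> rho T J j"
    and n: "n > 0" and \<mu>: "\<mu> > 0"
  shows "measure_pmf.prob (Pi_pmf {..<num_arcs n \<mu>} None (\<lambda>_. arc_pmf n C I J tp))
           {arcs. s \<le> card {a. a < num_arcs n \<mu> \<and> arcs a \<in> loop_arcs}}
         \<le> exp (2 * \<mu> * (2 / \<delta> + 1)) / 2 ^ s
           + n * measure_pmf.prob C (scarce_colours T J \<delta> n tp)"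
    (is "?P \<le> ?B + real n * ?y")
proof -
  define m where "m = num_arcs n \<mu>"
  define q where "q = measure_pmf.prob (arc_pmf n C I J tp) loop_arcs"
  have q: "0 \<le> q" "q \<le> 2 / (\<delta> * n) + ?y"
    unfolding q_def using prob_arc_loop_le[OF types \<delta> gap n] by auto
  have "?P \<le> real (m choose s) * q ^ s"
    unfolding m_def q_def by (rule prob_Pi_pmf_card_ge_le)
  also have "\<dots> \<le> exp (2 * real m * q) / 2 ^ s"
    using q by (intro binomial_mult_power_le_exp) auto
  finally have P_le: "?P \<le> exp (2 * real m * q) / 2 ^ s" .
  show ?thesis
  proof (cases "?y \<le> 1 / n")
    case True
    have "q \<le> (2 / \<delta> + 1) / n"
      using q True \<delta> n by (simp add: add_divide_distrib)
    then have "m * q \<le> (\<mu> * n) * ((2 / \<delta> + 1) / n)"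
      using q \<delta> \<mu> num_arcs_le[of \<mu> n] by (intro mult_mono) (auto simp: m_def)
    also have "\<dots> = \<mu> * (2 / \<delta> + 1)" using n by simp
    finally have "exp (2 * real m * q) / 2 ^ s \<le> ?B"
      by (intro divide_right_mono) auto
    moreover have "0 \<le> real n * ?y" by simp
    ultimately show ?thesis using P_le by linarith
  next
    case False
    then have "1 < n * ?y" using n by (simp add: field_simps)
    moreover have "?P \<le> 1" by simp
    moreover have "0 \<le> ?B" by simp
    ultimately show ?thesis by linarith
  qed
qed

lemma CCI_eq_bind:
  "CCI n \<mu> T C I J = bind_pmf (Pi_pmf {..<n} 0 (\<lambda>_. T))
     (\<lambda>tp. map_pmf (Pair tp) (Pi_pmf {..<num_arcs n \<mu>} None (\<lambda>_. arc_pmf n C I J tp)))"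
  by (simp add: CCI_def map_pmf_def)

lemma prob_loop_count_ge_le:
  assumes n: "n > 0" and \<delta>: "\<delta> > 0" and \<mu>: "\<mu> > 0"
    and gap: "\<And>j. 0 < rho T J j \<Longrightarrow> \<delta> \<le> rho T J j"
  shows "measure_pmf.prob (CCI n \<mu> T C I J) {G. s \<le> loop_count (num_arcs n \<mu>) G}
         \<le> exp (2 * \<mu> * (2 / \<delta> + 1)) / 2 ^ s + n * exp (- (\<delta>\<^sup>2 * n / 2))"
proof -
  define Ty where "Ty = Pi_pmf {..<n} 0 (\<lambda>_. T)"
  define B where "B = exp (2 * \<mu> * (2 / \<delta> + 1)) / 2 ^ s"
  define y where "y = (\<lambda>tp. measure_pmf.prob C (scarce_colours T J \<delta> n tp))"
  define f where "f = (\<lambda>tp. measure_pmf.prob (Pi_pmf {..<num_arcs n \<mu>} None (\<lambda>_. arc_pmf n C I J tp))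
    {arcs. s \<le> card {a. a < num_arcs n \<mu> \<and> arcs a \<in> loop_arcs}})"
  have y: "0 \<le> y tp" "y tp \<le> 1" for tp unfolding y_def by auto
  have "measure_pmf.prob (CCI n \<mu> T C I J) {G. s \<le> loop_count (num_arcs n \<mu>) G}
      = measure_pmf.expectation Ty f"
    by (simp add: CCI_eq_bind measure_bind_pmf vimage_def loop_count_def Ty_def f_def)
  also have "\<dots> \<le> measure_pmf.expectation Ty (\<lambda>tp. B + n * y tp)"
  proof (rule integral_mono_AE)
    show "integrable (measure_pmf Ty) f"
      unfolding f_def by (rule integrable_measure_pmf_bounded[where B=1]) auto
    show "integrable (measure_pmf Ty) (\<lambda>tp. B + n * y tp)"
    proof (rule integrable_measure_pmf_bounded[where B="\<bar>B\<bar> + n"])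
      fix tp
      have "0 \<le> n * y tp" "n * y tp \<le> n"
        using y[of tp] by (simp_all add: mult_left_le)
      then show "\<bar>B + n * y tp\<bar> \<le> \<bar>B\<bar> + n" by linarith
    qed
    show "AE tp in measure_pmf Ty. f tp \<le> B + n * y tp"
      unfolding AE_measure_pmf_iff B_def y_def Ty_def f_def
      by (intro ballI prob_many_loops_given_types_le \<delta> gap n \<mu>)
         (auto simp: set_Pi_pmf PiE_dflt_def)
  qed
  also have "\<dots> = B + n * measure_pmf.expectation Ty y"
    by (subst Bochner_Integration.integral_add)
       (use y in \<open>auto intro!: integrable_measure_pmf_bounded[where B=1]\<close>)
  also have "\<dots> \<le> B + n * exp (- (\<delta>\<^sup>2 * n / 2))"
    using expectation_scarce_colours_le[OF n \<delta>, of T C J]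
    by (intro add_left_mono mult_left_mono) (auto simp: y_def Ty_def)
  finally show ?thesis unfolding B_def .
qed

lemma eventually_tails_le_powr:
  fixes A a d r :: real
  assumes "a > 0" "d > 0" "r > 0"
  shows "eventually (\<lambda>n::nat. A * 2 powr (- (real n powr a)) + n * exp (- (d * n))
           \<le> real n powr (- r)) sequentially"
proof -
  have "(\<lambda>n::nat. A * 2 powr (- (real n powr a))) \<in> o(\<lambda>n. real n powr (- r))"
    using assms by real_asymp
  moreover have "(\<lambda>n::nat. n * exp (- (d * n))) \<in> o(\<lambda>n. real n powr (- r))"
    using assms by real_asymp
  ultimately have "(\<lambda>n::nat. A * 2 powr (- (real n powr a)) + n * exp (- (d * n)))
      \<in> o(\<lambda>n. real n powr (- r))"
    by (rule sum_in_smallo)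
  from landau_o.smallD[OF this zero_less_one] show ?thesis
    by eventually_elim simp
qed

lemma prob_self_loops_le:
  assumes n: "n > 0" and \<delta>: "\<delta> > 0" and \<mu>: "\<mu> > 0"
    and gap: "\<And>j. 0 < rho T J j \<Longrightarrow> \<delta> \<le> rho T J j"
  shows "measure_pmf.prob (CCI n \<mu> T C I J)
           {G. \<exists>t\<in>K. real (self_loops (num_arcs n \<mu>) t G) > x}
         \<le> exp (2 * \<mu> * (2 / \<delta> + 1)) * 2 powr (- x) + n * exp (- (\<delta>\<^sup>2 / 2 * n))"
proof -
  define A where "A = exp (2 * \<mu> * (2 / \<delta> + 1))"
  define s where "s = nat \<lceil>x\<rceil>"
  have "measure_pmf.prob (CCI n \<mu> T C I J)
          {G. \<exists>t\<in>K. real (self_loops (num_arcs n \<mu>) t G) > x}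
      \<le> measure_pmf.prob (CCI n \<mu> T C I J) {G. s \<le> loop_count (num_arcs n \<mu>) G}"
  proof (intro measure_pmf.finite_measure_mono subsetI)
    fix G assume "G \<in> {G. \<exists>t\<in>K. real (self_loops (num_arcs n \<mu>) t G) > x}"
    then obtain t where "x < real (self_loops (num_arcs n \<mu>) t G)" by blast
    also have "\<dots> \<le> real (loop_count (num_arcs n \<mu>) G)"
      using self_loops_le_loop_count by simp
    finally show "G \<in> {G. s \<le> loop_count (num_arcs n \<mu>) G}"
      by (simp add: s_def)
  qed auto
  also have "\<dots> \<le> A / 2 ^ s + n * exp (- (\<delta>\<^sup>2 * n / 2))"
    unfolding A_def by (rule prob_loop_count_ge_le[OF n \<delta> \<mu> gap])
  also have "A / 2 ^ s \<le> A * 2 powr (- x)"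
  proof -
    have "2 powr x \<le> 2 powr real s"
      unfolding s_def by (intro powr_mono) linarith+
    then show ?thesis
      by (simp add: A_def powr_minus divide_simps powr_realpow)
  qed
  finally show ?thesis by (simp add: A_def mult.commute)
qed

theorem lemma8:
  fixes T :: "nat pmf" and C :: "(nat \<times> nat) pmf"
    and I J :: "nat \<Rightarrow> nat \<Rightarrow> bool" and \<mu> \<epsilon> \<tau> :: real
  assumes mu_pos: "\<mu> > 0"
    and eps_pos: "\<epsilon> > 0"
    and moment: "integrable (measure_pmf T) (\<lambda>k. real k powr (1 + \<epsilon>))"
    and lam_inf: "\<exists>\<delta>>0. \<forall>i. lam T I i > 0 \<longrightarrow> lam T I i \<ge> \<delta>"
    and rho_inf: "\<exists>\<delta>>0. \<forall>j. rho T J j > 0 \<longrightarrow> rho T J j \<ge> \<delta>"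
    and tau: "0 < \<tau>" "\<tau> < 1"
  shows "\<forall>r>0. \<forall>\<nu><\<tau>. eventually (\<lambda>n.
           measure_pmf.prob (CCI n \<mu> T C I J)
             {G. \<exists>t\<in>{1..u_up T n \<tau>}. real (self_loops (num_arcs n \<mu>) t G) > real n powr (1 - \<nu>)}
           \<le> real n powr (- r)) sequentially"
proof (intro allI impI)
  fix r \<nu> :: real
  assume "r > 0" "\<nu> < \<tau>"
  obtain \<delta> where \<delta>: "\<delta> > 0" and gap: "\<And>j. 0 < rho T J j \<Longrightarrow> \<delta> \<le> rho T J j"
    using rho_inf by blast
  have "eventually (\<lambda>n::nat. exp (2 * \<mu> * (2 / \<delta> + 1)) * 2 powr (- (real n powr (1 - \<nu>)))
          + n * exp (- (\<delta>\<^sup>2 / 2 * n)) \<le> real n powr (- r)) sequentially"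
    using \<open>r > 0\<close> \<open>\<nu> < \<tau>\<close> tau \<delta> by (intro eventually_tails_le_powr) auto
  with eventually_gt_at_top[of 0]
  show "eventually (\<lambda>n. measure_pmf.prob (CCI n \<mu> T C I J)
      {G. \<exists>t\<in>{1..u_up T n \<tau>}. real (self_loops (num_arcs n \<mu>) t G) > real n powr (1 - \<nu>)}
      \<le> real n powr (- r)) sequentially"
    by eventually_elim (rule order_trans[OF prob_self_loops_le[OF _ \<delta> mu_pos gap]])
qed

end
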